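(* There exist $\delta_0>0$, $\varepsilon_1>0$ and $C>0$ such that for all $\delta\in(0,\delta_0]$, $\varepsilon\in(0,\varepsilon_1]$, all initial conditions with $h^\delta_\varepsilon(0)\in\mathcal V$, and all $0\le\mathcal T'\le\mathcal T\le (T\wedge T^\delta_\varepsilon)/\varepsilon$, \[ \Bigl|\int_{\mathcal T'}^{\mathcal T}H^\delta(z^\delta_\varepsilon(s))\,ds\Bigr|\le C\,\bigl(1\vee(\mathcal T-\mathcal T')\bigr). \]
   Context: Let $\kappa:\mathbb R\to\mathbb R$ be $\mathcal C^2$ with $\kappa(x)=0$ for $x\ge1$ and $\kappa'(x)<0$ for $x<1$; $\kappa_\delta(x)=\kappa(x/\delta)$. Soft core system with $n_1=n_2=1$: Hamiltonian $\frac{MV^2}{2}+\frac{m_1v_1^2}{2}+\frac{m_2v_2^2}{2}+\kappa_\delta(x_1)+\kappa_\delta(X-x_1)+\kappa_\delta(x_2-X)+\kappa_\delta(1-x_2)$ (piston at $X$, gas particles of masses $m_1,m_2$ at $x_1<X<x_2$), with $\varepsilon=M^{-1/2}$, $W=V/\varepsilon$. Energies $E_1=\frac12m_1v_1^2+\kappa_\delta(x_1)+\kappa_\delta(X-x_1)$, $E_2=\frac12m_2v_2^2+\kappa_\delta(x_2-X)+\kappa_\delta(1-x_2)$; slow variables $h=(X,W,E_1,E_2)$. $z^\delta_\varepsilon(t)$ denotes the phase point at time $t$ and $h^\delta_\varepsilon(t)$ its slow variables. Define $H^\delta(z)=\bigl(W,\ -\kappa'_\delta(X-x_1)+\kappa'_\delta(x_2-X),\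 W\kappa'_\delta(X-x_1),\ -W\kappa'_\delta(x_2-X)\bigr)$, so that $dh^\delta_\varepsilon/dt=\varepsilon H^\delta(z^\delta_\varepsilon)$. Periods: for $\delta>0$, $a=\delta\kappa^{-1}(E)$ ($\kappa^{-1}$ the inverse of $\kappa|_{[0,1]}$), $T_1(X,E,\delta)=2\int_a^{X-a}\sqrt{\frac{m_1/2}{E-\kappa_\delta(s)-\kappa_\delta(X-s)}}ds$, $T_2(X,E,\delta)=2\int_{X+a}^{1-a}\sqrt{\frac{m_2/2}{E-\kappa_\delta(s-X)-\kappa_\delta(1-s)}}ds$. Averaged field $\bar H^\delta(h)=\bigl(W,\ \tfrac{\sqrt{8m_1E_1}}{T_1}-\tfrac{\sqrt{8m_2E_2}}{T_2},\ -W\tfrac{\sqrt{8m_1E_1}}{T_1},\ W\tfrac{\sqrt{8m_2E_2}}{T_2}\bigr)$ with $T_i=T_i(X,E_i,\delta)$; $\bar h^\delta$ solves $d\bar h^\delta/d\tau=\bar H^\delta(\bar h^\delta)$, $\bar h^\delta(0)=h^\delta_\varepsilon(0)$. $\mathcal V\subset\mathbb R^4$ is compact with $h\in\mathcal V\Rightarrow X\in A,W\in B,E_i\in C$ for compact $A\subset(0,1)$, $B\subset\mathbb R$, $C\subset(0,\kappa(0))$. $T>0$ is fixed and $T^\delta_\varepsilon=\inf\{\tau\ge0:\bar h^\delta(\tau)\notin\mathcal V\text{ or }h^\delta_\varepsilon(\tau/\varepsilon)\notin\mathcal V\}$. *)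

theory Defs
  imports "HOL-Analysis.Analysis"
begin

text \<open>Phase point z = (X, V, x1, v1, x2, v2) (piston position/velocity, gas particle
positions/velocities). Slow variables h = (X, W, E1, E2).\<close>

type_synonym phase = "real \<times> real \<times> real \<times> real \<times> real \<times> real"
type_synonym slow = "real \<times> real \<times> real \<times> real"

definition kd :: "(real \<Rightarrow> real) \<Rightarrow> real \<Rightarrow> real \<Rightarrow> real" where
  "kd k \<delta> x = k (x / \<delta>)"

definition kd' :: "(real \<Rightarrow> real) \<Rightarrow> real \<Rightarrow> real \<Rightarrow> real" where
  "kd' kp \<delta> x = kp (x / \<delta>) / \<delta>"

text \<open>Hamiltonian vector field, with piston mass M = eps^(-2).\<close>
definition field :: "(real \<Rightarrow> real) \<Rightarrow> real \<Rightarrow> real \<Rightarrow> real \<Rightarrow> real \<Rightarrow> phase \<Rightarrow> phase" where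
  "field kp m1 m2 \<epsilon> \<delta> = (\<lambda>(X, V, x1, v1, x2, v2).
     (V,
      \<epsilon>\<^sup>2 * (- kd' kp \<delta> (X - x1) + kd' kp \<delta> (x2 - X)),
      v1,
      (- kd' kp \<delta> x1 + kd' kp \<delta> (X - x1)) / m1,
      v2,
      (- kd' kp \<delta> (x2 - X) + kd' kp \<delta> (1 - x2)) / m2))"

definition slowvars :: "(real \<Rightarrow> real) \<Rightarrow> real \<Rightarrow> real \<Rightarrow> real \<Rightarrow> real \<Rightarrow> phase \<Rightarrow> slow" where
  "slowvars k m1 m2 \<epsilon> \<delta> = (\<lambda>(X, V, x1, v1, x2, v2).
     (X, V / \<epsilon>,
      m1 * v1\<^sup>2 / 2 + kd k \<delta> x1 + kd k \<delta> (X - x1),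
      m2 * v2\<^sup>2 / 2 + kd k \<delta> (x2 - X) + kd k \<delta> (1 - x2)))"

definition Hfield :: "(real \<Rightarrow> real) \<Rightarrow> real \<Rightarrow> real \<Rightarrow> phase \<Rightarrow> slow" where
  "Hfield kp \<epsilon> \<delta> = (\<lambda>(X, V, x1, v1, x2, v2).
     (V / \<epsilon>,
      - kd' kp \<delta> (X - x1) + kd' kp \<delta> (x2 - X),
      (V / \<epsilon>) * kd' kp \<delta> (X - x1),
      - (V / \<epsilon>) * kd' kp \<delta> (x2 - X)))"

definition kinv :: "(real \<Rightarrow> real) \<Rightarrow> real \<Rightarrow> real" where
  "kinv k E = (THE s. s \<in> {0..1} \<and> k s = E)"

definition Tper1 :: "(real \<Rightarrow> real) \<Rightarrow> real \<Rightarrow> real \<Rightarrow> real \<Rightarrow> real \<Rightarrow> real" where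
  "Tper1 k m1 X E \<delta> = (let a = \<delta> * kinv k E in
     2 * integral {a .. X - a} (\<lambda>s. sqrt ((m1 / 2) / (E - kd k \<delta> s - kd k \<delta> (X - s)))))"

definition Tper2 :: "(real \<Rightarrow> real) \<Rightarrow> real \<Rightarrow> real \<Rightarrow> real \<Rightarrow> real \<Rightarrow> real" where
  "Tper2 k m2 X E \<delta> = (let a = \<delta> * kinv k E in
     2 * integral {X + a .. 1 - a} (\<lambda>s. sqrt ((m2 / 2) / (E - kd k \<delta> (s - X) - kd k \<delta> (1 - s)))))"

definition Hbar :: "(real \<Rightarrow> real) \<Rightarrow> real \<Rightarrow> real \<Rightarrow> real \<Rightarrow> slow \<Rightarrow> slow" where
  "Hbar k m1 m2 \<delta> = (\<lambda>(X, W, E1, E2).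
     (W,
      sqrt (8 * m1 * E1) / Tper1 k m1 X E1 \<delta> - sqrt (8 * m2 * E2) / Tper2 k m2 X E2 \<delta>,
      - W * sqrt (8 * m1 * E1) / Tper1 k m1 X E1 \<delta>,
      W * sqrt (8 * m2 * E2) / Tper2 k m2 X E2 \<delta>))"

text \<open>min(T, T^delta_eps): infimum of T and the exit times.\<close>
definition cutoff :: "slow set \<Rightarrow> real \<Rightarrow> (real \<Rightarrow> slow) \<Rightarrow> (real \<Rightarrow> slow) \<Rightarrow> real \<Rightarrow> real" where
  "cutoff Vs T hbar h \<epsilon> = Inf (insert T {\<tau>. 0 \<le> \<tau> \<and> (hbar \<tau> \<notin> Vs \<or> h (\<tau> / \<epsilon>) \<notin> Vs)})"

end

theory Submission
  imports Defs
begin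

text \<open>
  For a gas particle with position \<open>x\<close> and velocity \<open>v\<close>, the virial
  \<open>d/dt (m v (x - \<delta>)) = m v\<^sup>2 + F (x - \<delta>)\<close> integrated over \<open>[T', TT]\<close> controls the time
  integral of the piston force \<open>-\<kappa>'\<^sub>\<delta>(X - x)\<close>: the wall force acts only where
  \<open>x < \<delta>\<close> and so enters with a favourable sign, the piston force acts only where
  \<open>x - \<delta> \<ge> a/2\<close> (with \<open>X \<ge> a\<close>, \<open>\<delta> \<le> a/4\<close>), the kinetic energy is at most \<open>2\<kappa>(0)\<close> and the
  boundary terms are bounded. Before the exit time the slow variables lie in \<open>\<V>\<close>, so
  the energies stay below the barrier \<open>\<kappa>(0)\<close>, which keeps the particles ordered
  and bounds all velocities; by closedness this persists up to \<open>TT\<close>. Every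
  component of \<open>H\<^sup>\<delta>\<close> is bounded by a constant plus a constant times the two
  piston forces, whence the bound linear in \<open>TT - T'\<close>.
\<close>

lemma has_vector_derivative_Pair_iff:
  "((\<lambda>x. (f x, g x)) has_vector_derivative (f', g')) (at x within S) \<longleftrightarrow>
     (f has_vector_derivative f') (at x within S) \<and> (g has_vector_derivative g') (at x within S)"
proof
  assume "((\<lambda>x. (f x, g x)) has_vector_derivative (f', g')) (at x within S)"
  from bounded_linear.has_vector_derivative[OF bounded_linear_fst this]
    bounded_linear.has_vector_derivative[OF bounded_linear_snd this]
  show "(f has_vector_derivative f') (at x within S) \<and> (g has_vector_derivative g') (at x within S)"
    by simp
qed (simp add: has_vector_derivative_Pair)

lemma image_atLeastAtMost_subset_closed:
  fixes f :: "real \<Rightarrow> 'a::topological_space"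
  assumes "a < b" "continuous_on {a..b} f" "closed F" "f ` {a..<b} \<subseteq> F"
  shows "f ` {a..b} \<subseteq> F"
proof -
  have "f ` closure {a..<b} \<subseteq> F"
    by (rule image_closure_subset) (use assms in \<open>auto intro: continuous_on_subset\<close>)
  then show ?thesis using \<open>a < b\<close> by simp
qed

lemma compact_subset_unit_interval_margin:
  fixes A :: "real set"
  assumes "compact A" "A \<subseteq> {0<..<1}"
  obtains a where "0 < a" "\<And>X. X \<in> A \<Longrightarrow> a \<le> X \<and> X \<le> 1 - a"
proof (cases "A = {}")
  case False
  have "continuous_on A (\<lambda>X. min X (1 - X))" by (intro continuous_intros)
  then obtain X0 where "X0 \<in> A" and X0: "\<And>X. X \<in> A \<Longrightarrow> min X0 (1 - X0) \<le> min X (1 - X)"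
    using continuous_attains_inf[OF assms(1) False] by blast
  show ?thesis
    by (rule that[of "min X0 (1 - X0)"]) (use \<open>X0 \<in> A\<close> assms(2) X0 in \<open>force+\<close>)
qed (rule that[of 1], auto)

lemma abs_le_one_plus_square: "\<bar>v::real\<bar> \<le> 1 + v\<^sup>2"
proof -
  have "0 \<le> (\<bar>v\<bar> - 1)\<^sup>2" by simp
  then show ?thesis using zero_le_power2[of v] by (simp add: power2_diff power2_abs)
qed

lemma mult_add_le_max_one:
  fixes p q L :: real
  assumes "0 \<le> p" "0 \<le> q"
  shows "p * L + q \<le> (p + q) * max 1 L"
proof -
  have "p * L \<le> p * max 1 L" "q * 1 \<le> q * max 1 L"
    using assms by (intro mult_left_mono; simp)+
  then show ?thesis by (simp add: distrib_right)
qed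

lemma integral_bound_by_antiderivative:
  fixes G g P f :: "real \<Rightarrow> real"
  assumes "a \<le> b"
    and G': "\<And>t. t \<in> {a..b} \<Longrightarrow> (G has_real_derivative g t) (at t within {a..b})"
    and "continuous_on {a..b} P" "continuous_on {a..b} f"
    and lower: "\<And>t. t \<in> {a..b} \<Longrightarrow> c * P t \<le> f t - g t"
    and upper: "\<And>t. t \<in> {a..b} \<Longrightarrow> f t \<le> K"
    and "\<bar>G a\<bar> \<le> L" "\<bar>G b\<bar> \<le> L"
  shows "c * integral {a..b} P \<le> K * (b - a) + 2 * L"
proof -
  have "(g has_integral (G b - G a)) {a..b}"
    by (rule fundamental_theorem_of_calculus[OF \<open>a \<le> b\<close>])
      (use G' in \<open>auto simp: has_real_derivative_iff_has_vector_derivative\<close>)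
  moreover have f: "f integrable_on {a..b}" and "P integrable_on {a..b}"
    using assms(3,4) by (auto intro: integrable_continuous_real)
  ultimately have "((\<lambda>t. c * P t) has_integral c * integral {a..b} P) {a..b}"
    and "((\<lambda>t. f t - g t) has_integral integral {a..b} f - (G b - G a)) {a..b}"
    by (auto intro: has_integral_diff has_integral_mult_right)
  then have "c * integral {a..b} P \<le> integral {a..b} f - (G b - G a)"
    using lower by (rule has_integral_le)
  moreover have "integral {a..b} f \<le> K * (b - a)"
    using integral_le[OF f integrable_const_ivl[of K a b]] upper \<open>a \<le> b\<close> by (simp add: mult.commute)
  ultimately show ?thesis using assms(7,8) by linarith
qed

definition confined :: "real \<Rightarrow> real \<Rightarrow> real \<Rightarrow> real \<Rightarrow> real \<Rightarrow> real \<Rightarrow> phase set" where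
  "confined a b E m1 m2 \<epsilon> = {(X, V, x1, v1, x2, v2).
     a \<le> X \<and> X \<le> 1 - a \<and> \<bar>V / \<epsilon>\<bar> \<le> b \<and> m1 * v1\<^sup>2 \<le> 2 * E \<and> m2 * v2\<^sup>2 \<le> 2 * E
     \<and> 0 \<le> x1 \<and> x1 \<le> X \<and> X \<le> x2 \<and> x2 \<le> 1}"

lemma closed_confined: "closed (confined a b E m1 m2 \<epsilon>)"
  unfolding confined_def case_prod_unfold divide_inverse
  by (intro closed_Collect_conj closed_Collect_le continuous_intros)

lemma in_Vs_before_cutoff:
  assumes "0 \<le> T" "0 < \<epsilon>" "0 \<le> t" "t < cutoff Vs T hb h \<epsilon> / \<epsilon>"
  shows "h t \<in> Vs"
proof (rule ccontr)
  assume "h t \<notin> Vs"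
  with assms(2,3) have "t * \<epsilon> \<in> insert T {\<tau>. 0 \<le> \<tau> \<and> (hb \<tau> \<notin> Vs \<or> h (\<tau> / \<epsilon>) \<notin> Vs)}"
    by simp
  then have "cutoff Vs T hb h \<epsilon> \<le> t * \<epsilon>"
    unfolding cutoff_def by (rule cInf_lower) (use assms(1) in \<open>auto intro: bdd_belowI[of _ 0]\<close>)
  with assms(2,4) show False by (simp add: pos_less_divide_eq)
qed

lemma norm_Hfield_le:
  assumes "\<bar>V / \<epsilon>\<bar> \<le> b" "0 \<le> - kd' kp \<delta> (X - x1)" "0 \<le> - kd' kp \<delta> (x2 - X)"
  shows "norm (Hfield kp \<epsilon> \<delta> (X, V, x1, v1, x2, v2))
           \<le> b + (1 + b) * (- kd' kp \<delta> (X - x1) - kd' kp \<delta> (x2 - X))"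
proof -
  define W P1 P2 where "W = V / \<epsilon>" "P1 = - kd' kp \<delta> (X - x1)" "P2 = - kd' kp \<delta> (x2 - X)"
  have "norm (Hfield kp \<epsilon> \<delta> (X, V, x1, v1, x2, v2)) = norm (W, P1 - P2, - W * P1, W * P2)"
    by (simp add: Hfield_def W_P1_P2_def)
  also have "\<dots> \<le> norm W + norm (P1 - P2) + norm (- W * P1) + norm (W * P2)"
    using norm_Pair_le[of W "(P1 - P2, - W * P1, W * P2)"] norm_Pair_le[of "P1 - P2" "(- W * P1, W * P2)"]
      norm_Pair_le[of "- W * P1" "W * P2"]
    by linarith
  also have "\<dots> = \<bar>W\<bar> + \<bar>P1 - P2\<bar> + \<bar>W * P1\<bar> + \<bar>W * P2\<bar>" by simp
  also have "\<dots> \<le> b + P1 + P2 + b * P1 + b * P2"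
  proof -
    have "\<bar>W\<bar> \<le> b" "0 \<le> P1" "0 \<le> P2" using assms by (simp_all add: W_P1_P2_def)
    then have "\<bar>W * P1\<bar> \<le> b * P1" "\<bar>W * P2\<bar> \<le> b * P2" "\<bar>P1 - P2\<bar> \<le> P1 + P2"
      by (simp_all add: abs_mult mult_right_mono abs_diff_le_iff)
    with \<open>\<bar>W\<bar> \<le> b\<close> show ?thesis by linarith
  qed
  also have "\<dots> = b + (1 + b) * (P1 + P2)" by (simp add: algebra_simps)
  finally show ?thesis by (simp add: W_P1_P2_def)
qed

text \<open>The right particle is the left one seen in the reflected coordinate \<open>1 - x\<close>.\<close>
lemma field_trajectory_derivatives:
  assumes "((\<lambda>t. (X t, V t, x1 t, v1 t, x2 t, v2 t)) has_vector_derivative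
    field kp m1 m2 \<epsilon> \<delta> (X t, V t, x1 t, v1 t, x2 t, v2 t)) (at t within S)"
  shows "(x1 has_real_derivative v1 t) (at t within S)"
    and "(v1 has_real_derivative (- kd' kp \<delta> (x1 t) + kd' kp \<delta> (X t - x1 t)) / m1) (at t within S)"
    and "((\<lambda>t. 1 - x2 t) has_real_derivative - v2 t) (at t within S)"
    and "((\<lambda>t. - v2 t) has_real_derivative
      (- kd' kp \<delta> (1 - x2 t) + kd' kp \<delta> ((1 - X t) - (1 - x2 t))) / m2) (at t within S)"
proof -
  have "(x1 has_real_derivative v1 t) (at t within S)"
    and "(v1 has_real_derivative (- kd' kp \<delta> (x1 t) + kd' kp \<delta> (X t - x1 t)) / m1) (at t within S)"
    and "(x2 has_real_derivative v2 t) (at t within S)"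
    and "(v2 has_real_derivative (- kd' kp \<delta> (x2 t - X t) + kd' kp \<delta> (1 - x2 t)) / m2) (at t within S)"
    using assms unfolding field_def
    by (simp_all add: has_vector_derivative_Pair_iff has_real_derivative_iff_has_vector_derivative)
  then show "(x1 has_real_derivative v1 t) (at t within S)"
    and "(v1 has_real_derivative (- kd' kp \<delta> (x1 t) + kd' kp \<delta> (X t - x1 t)) / m1) (at t within S)"
    and "((\<lambda>t. 1 - x2 t) has_real_derivative - v2 t) (at t within S)"
    and "((\<lambda>t. - v2 t) has_real_derivative
      (- kd' kp \<delta> (1 - x2 t) + kd' kp \<delta> ((1 - X t) - (1 - x2 t))) / m2) (at t within S)"
    by (auto intro!: derivative_eq_intros simp: minus_divide_left)
qed

locale soft_core_potential =
  fixes k kp :: "real \<Rightarrow> real"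
  assumes k_deriv: "\<And>x. (k has_real_derivative kp x) (at x)"
    and kp_cont: "continuous_on UNIV kp"
    and k_zero: "\<And>x. 1 \<le> x \<Longrightarrow> k x = 0"
    and kp_neg: "\<And>x. x < 1 \<Longrightarrow> kp x < 0"
begin

lemma k_antimono_below_one:
  assumes "x \<le> y" "y \<le> 1"
  shows "k y \<le> k x"
proof (rule DERIV_nonpos_imp_decreasing_open[OF \<open>x \<le> y\<close>])
  fix t assume "x < t" "t < y"
  then show "\<exists>D. (k has_real_derivative D) (at t) \<and> D \<le> 0"
    using k_deriv kp_neg[of t] \<open>y \<le> 1\<close> by (intro exI[of _ "kp t"]) auto
qed (use k_deriv in \<open>auto intro!: continuous_at_imp_continuous_on DERIV_isCont\<close>)

lemma k_nonneg: "0 \<le> k x"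
  using k_antimono_below_one[of x 1] k_zero[of 1] k_zero[of x] by (cases "x \<le> 1") auto

lemma k_ge_k0: "x \<le> 0 \<Longrightarrow> k 0 \<le> k x"
  by (rule k_antimono_below_one) auto

text \<open>Every point of \<open>[1, \<infinity>)\<close> is a global minimum of the nonnegative potential.\<close>
lemma kp_eq_0: "1 \<le> x \<Longrightarrow> kp x = 0"
  by (rule DERIV_local_min[OF k_deriv zero_less_one]) (simp add: k_zero k_nonneg)

lemma kp_nonpos: "kp x \<le> 0"
  using kp_neg[of x] kp_eq_0[of x] by (cases "x < 1") auto

lemma neg_kd'_mult_nonneg:
  assumes "0 < \<delta>" "u < \<delta> \<Longrightarrow> 0 \<le> w"
  shows "0 \<le> - kd' kp \<delta> u * w"
proof (cases "u < \<delta>")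
  case True
  then show ?thesis
    using assms kp_nonpos[of "u / \<delta>"] by (simp add: kd'_def mult_nonpos_nonneg divide_nonpos_pos)
next
  case False
  then show ?thesis using assms(1) kp_eq_0[of "u / \<delta>"] by (simp add: kd'_def)
qed

lemma neg_kd'_nonneg: "0 < \<delta> \<Longrightarrow> 0 \<le> - kd' kp \<delta> u"
  using neg_kd'_mult_nonneg[of \<delta> u 1] by simp

lemma continuous_on_kd':
  "0 < \<delta> \<Longrightarrow> continuous_on S f \<Longrightarrow> continuous_on S (\<lambda>t. kd' kp \<delta> (f t))"
  unfolding kd'_def
  by (intro continuous_intros continuous_on_compose2[OF kp_cont]) auto

lemma energy_below_barrier:
  assumes "0 < \<delta>" "0 < m" "m * v\<^sup>2 / 2 + kd k \<delta> x + kd k \<delta> (L - x) < k 0"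
  shows "0 < x" "x < L" "m * v\<^sup>2 \<le> 2 * k 0"
proof -
  have below: "0 < u" if "kd k \<delta> u < k 0" for u
  proof (rule ccontr)
    assume "\<not> 0 < u"
    then have "u / \<delta> \<le> 0" using assms(1) by (simp add: divide_nonpos_pos)
    then show False using that k_ge_k0[OF \<open>u / \<delta> \<le> 0\<close>] by (simp add: kd_def)
  qed
  have "0 \<le> m * v\<^sup>2" using assms(2) by simp
  then show "0 < x" "x < L" "m * v\<^sup>2 \<le> 2 * k 0"
    using assms(3) below[of x] below[of "L - x"] k_nonneg[of "x / \<delta>"] k_nonneg[of "(L - x) / \<delta>"]
    by (auto simp: kd_def)
qed

lemma slowvars_in_Vs_imp_confined:
  assumes "0 < \<delta>" "0 < m1" "0 < m2"
    and Vs_bounds: "\<And>X W E1 E2. (X, W, E1, E2) \<in> Vs \<Longrightarrow>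
      a \<le> X \<and> X \<le> 1 - a \<and> \<bar>W\<bar> \<le> b \<and> E1 < k 0 \<and> E2 < k 0"
    and "slowvars k m1 m2 \<epsilon> \<delta> p \<in> Vs"
  shows "p \<in> confined a b (k 0) m1 m2 \<epsilon>"
proof -
  obtain X V x1 v1 x2 v2 where p: "p = (X, V, x1, v1, x2, v2)" by (cases p)
  have "(X, V / \<epsilon>, m1 * v1\<^sup>2 / 2 + kd k \<delta> x1 + kd k \<delta> (X - x1),
      m2 * v2\<^sup>2 / 2 + kd k \<delta> (x2 - X) + kd k \<delta> (1 - X - (x2 - X))) \<in> Vs"
    using assms(5) by (simp add: p slowvars_def)
  then have "a \<le> X" "X \<le> 1 - a" "\<bar>V / \<epsilon>\<bar> \<le> b"
    and E1: "m1 * v1\<^sup>2 / 2 + kd k \<delta> x1 + kd k \<delta> (X - x1) < k 0"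
    and E2: "m2 * v2\<^sup>2 / 2 + kd k \<delta> (x2 - X) + kd k \<delta> (1 - X - (x2 - X)) < k 0"
    using Vs_bounds by blast+
  with energy_below_barrier[OF assms(1,2) E1] energy_below_barrier[OF assms(1,3) E2] show ?thesis
    by (auto simp: p confined_def)
qed

lemma piston_force_integral_bound:
  fixes x v X :: "real \<Rightarrow> real"
  assumes "T' \<le> TT" "0 < \<delta>" "4 * \<delta> \<le> a" "0 < m"
    and x': "\<And>t. t \<in> {T'..TT} \<Longrightarrow> (x has_real_derivative v t) (at t within {T'..TT})"
    and v': "\<And>t. t \<in> {T'..TT} \<Longrightarrow>
      (v has_real_derivative (- kd' kp \<delta> (x t) + kd' kp \<delta> (X t - x t)) / m) (at t within {T'..TT})"
    and "continuous_on {T'..TT} X"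
    and bounds: "\<And>t. t \<in> {T'..TT} \<Longrightarrow>
      0 \<le> x t \<and> x t \<le> X t \<and> a \<le> X t \<and> X t \<le> 1 \<and> m * (v t)\<^sup>2 \<le> 2 * E"
  shows "integral {T'..TT} (\<lambda>t. - kd' kp \<delta> (X t - x t)) \<le> 4 / a * (E * (TT - T') + m + 2 * E)"
proof -
  let ?S = "{T'..TT}"
  define F where "F t = - kd' kp \<delta> (x t) + kd' kp \<delta> (X t - x t)" for t
  have "a \<le> 1" using bounds[of T'] \<open>T' \<le> TT\<close> by auto
  have "continuous_on ?S x" "continuous_on ?S v"
    using x' v' by (auto simp: continuous_on_eq_continuous_within intro: DERIV_continuous x' v')
  have G': "((\<lambda>t. m * v t * (x t - \<delta>)) has_real_derivative F t * (x t - \<delta>) + m * (v t)\<^sup>2)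
      (at t within ?S)" if "t \<in> ?S" for t
    using x'[OF that] v'[OF that] \<open>0 < m\<close>
    by (auto intro!: derivative_eq_intros simp: F_def power2_eq_square)
  text \<open>The wall force acts only where \<open>x < \<delta>\<close>, the piston force only where \<open>x > X - \<delta> \<ge> a/2 + \<delta>\<close>.\<close>
  have virial: "a / 2 * - kd' kp \<delta> (X t - x t) \<le> m * (v t)\<^sup>2 - (F t * (x t - \<delta>) + m * (v t)\<^sup>2)"
    if "t \<in> ?S" for t
  proof -
    have "0 \<le> - kd' kp \<delta> (x t) * (\<delta> - x t)"
      by (rule neg_kd'_mult_nonneg) (use \<open>0 < \<delta>\<close> in auto)
    moreover have "0 \<le> - kd' kp \<delta> (X t - x t) * (x t - \<delta> - a / 2)"
      by (rule neg_kd'_mult_nonneg) (use bounds[OF that] \<open>0 < \<delta>\<close> \<open>4 * \<delta> \<le> a\<close> in auto)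
    ultimately show ?thesis by (simp add: F_def algebra_simps)
  qed
  have endpoint: "\<bar>m * v t * (x t - \<delta>)\<bar> \<le> m + 2 * E" if "t \<in> ?S" for t
  proof -
    have "\<bar>x t - \<delta>\<bar> \<le> 1" using bounds[OF that] \<open>0 < \<delta>\<close> \<open>4 * \<delta> \<le> a\<close> \<open>a \<le> 1\<close> by auto
    then have "\<bar>m * v t * (x t - \<delta>)\<bar> \<le> m * \<bar>v t\<bar>"
      using \<open>0 < m\<close> mult_left_mono[of "\<bar>x t - \<delta>\<bar>" 1 "m * \<bar>v t\<bar>"] by (simp add: abs_mult)
    also have "\<dots> \<le> m * (1 + (v t)\<^sup>2)"
      using \<open>0 < m\<close> abs_le_one_plus_square by (simp add: mult_left_mono)
    also have "\<dots> \<le> m + 2 * E" using bounds[OF that] by (simp add: algebra_simps)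
    finally show ?thesis .
  qed
  have cP: "continuous_on ?S (\<lambda>t. - kd' kp \<delta> (X t - x t))"
    using continuous_on_kd'[OF \<open>0 < \<delta>\<close> continuous_on_diff[OF assms(7) \<open>continuous_on ?S x\<close>]]
    by (rule continuous_on_minus)
  have cf: "continuous_on ?S (\<lambda>t. m * (v t)\<^sup>2)"
    using \<open>continuous_on ?S v\<close> by (intro continuous_intros)
  have "a / 2 * integral ?S (\<lambda>t. - kd' kp \<delta> (X t - x t)) \<le> 2 * E * (TT - T') + 2 * (m + 2 * E)"
    by (rule integral_bound_by_antiderivative[where G = "\<lambda>t. m * v t * (x t - \<delta>)"
          and g = "\<lambda>t. F t * (x t - \<delta>) + m * (v t)\<^sup>2" and f = "\<lambda>t. m * (v t)\<^sup>2",
          OF \<open>T' \<le> TT\<close> G' cP cf virial])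
      (use bounds endpoint \<open>T' \<le> TT\<close> in auto)
  then show ?thesis using \<open>0 < \<delta>\<close> \<open>4 * \<delta> \<le> a\<close> by (simp add: field_simps)
qed

lemma norm_integral_Hfield_le:
  fixes X V x1 v1 x2 v2 :: "real \<Rightarrow> real"
  assumes "T' \<le> TT" "0 < \<delta>"
    and cont: "continuous_on {T'..TT} X" "continuous_on {T'..TT} V"
      "continuous_on {T'..TT} x1" "continuous_on {T'..TT} x2"
    and W: "\<And>t. t \<in> {T'..TT} \<Longrightarrow> \<bar>V t / \<epsilon>\<bar> \<le> b"
  shows "norm (integral {T'..TT} (\<lambda>t. Hfield kp \<epsilon> \<delta> (X t, V t, x1 t, v1 t, x2 t, v2 t)))
    \<le> b * (TT - T') + (1 + b) * (integral {T'..TT} (\<lambda>t. - kd' kp \<delta> (X t - x1 t))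
                                  + integral {T'..TT} (\<lambda>t. - kd' kp \<delta> (x2 t - X t)))"
proof -
  let ?S = "{T'..TT}"
  define P1 P2 where "P1 = (\<lambda>t. - kd' kp \<delta> (X t - x1 t))" "P2 = (\<lambda>t. - kd' kp \<delta> (x2 t - X t))"
  have cP: "continuous_on ?S P1" "continuous_on ?S P2"
    using continuous_on_kd'[OF \<open>0 < \<delta>\<close> continuous_on_diff[OF cont(1,3)]]
      continuous_on_kd'[OF \<open>0 < \<delta>\<close> continuous_on_diff[OF cont(4,1)]]
    unfolding P1_P2_def by (auto intro: continuous_on_minus)
  have "continuous_on ?S (\<lambda>t. (V t / \<epsilon>, P1 t - P2 t, - (V t / \<epsilon>) * P1 t, (V t / \<epsilon>) * P2 t))"
    using cont(2) cP unfolding divide_inverse by (intro continuous_intros)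
  then have int_H: "(\<lambda>t. Hfield kp \<epsilon> \<delta> (X t, V t, x1 t, v1 t, x2 t, v2 t)) integrable_on ?S"
    by (rule integrable_continuous_real[THEN integrable_eq]) (simp add: Hfield_def P1_P2_def)
  have "((\<lambda>t. b) has_integral b * (TT - T')) ?S"
    using has_integral_const_real[of b T' TT] \<open>T' \<le> TT\<close> by (simp add: mult.commute)
  moreover have "(P1 has_integral integral ?S P1) ?S" "(P2 has_integral integral ?S P2) ?S"
    using cP by (auto intro: integrable_integral integrable_continuous_real)
  ultimately have int_bound: "((\<lambda>t. b + (1 + b) * (P1 t + P2 t)) has_integral
      b * (TT - T') + (1 + b) * (integral ?S P1 + integral ?S P2)) ?S"
    by (intro has_integral_add has_integral_mult_right)
  have "norm (Hfield kp \<epsilon> \<delta> (X t, V t, x1 t, v1 t, x2 t, v2 t)) \<le> b + (1 + b) * (P1 t + P2 t)"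
    if "t \<in> ?S" for t
    using norm_Hfield_le[OF W[OF that] neg_kd'_nonneg neg_kd'_nonneg] \<open>0 < \<delta>\<close>
    by (simp add: P1_P2_def)
  then have "norm (integral ?S (\<lambda>t. Hfield kp \<epsilon> \<delta> (X t, V t, x1 t, v1 t, x2 t, v2 t)))
      \<le> integral ?S (\<lambda>t. b + (1 + b) * (P1 t + P2 t))"
    by (intro integral_norm_bound_integral[OF int_H has_integral_integrable[OF int_bound]])
  also have "\<dots> = b * (TT - T') + (1 + b) * (integral ?S P1 + integral ?S P2)"
    by (rule integral_unique[OF int_bound])
  finally show ?thesis by (simp only: P1_P2_def)
qed

lemma Hfield_integral_bound:
  fixes z :: "real \<Rightarrow> phase"
  assumes "T' \<le> TT" "0 < \<delta>" "4 * \<delta> \<le> a" "0 < m1" "0 < m2"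
    and z': "\<And>t. t \<in> {T'..TT} \<Longrightarrow>
      (z has_vector_derivative field kp m1 m2 \<epsilon> \<delta> (z t)) (at t within {T'..TT})"
    and conf: "\<And>t. t \<in> {T'..TT} \<Longrightarrow> z t \<in> confined a b E m1 m2 \<epsilon>"
  shows "norm (integral {T'..TT} (\<lambda>t. Hfield kp \<epsilon> \<delta> (z t)))
    \<le> b * (TT - T') + (1 + b) * (4 / a * (2 * E * (TT - T') + m1 + m2 + 4 * E))"
proof -
  let ?S = "{T'..TT}"
  define X V x1 v1 x2 v2 where "X t = fst (z t)" "V t = fst (snd (z t))"
    "x1 t = fst (snd (snd (z t)))" "v1 t = fst (snd (snd (snd (z t))))"
    "x2 t = fst (snd (snd (snd (snd (z t)))))" "v2 t = snd (snd (snd (snd (snd (z t)))))" for t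
  have z: "z = (\<lambda>t. (X t, V t, x1 t, v1 t, x2 t, v2 t))"
    by (simp add: X_V_x1_v1_x2_v2_def)
  note derivs = field_trajectory_derivatives[OF z'[unfolded z]]
  have "continuous_on ?S z"
    using z' by (auto simp: continuous_on_eq_continuous_within intro: has_vector_derivative_continuous z')
  then have cont: "continuous_on ?S X" "continuous_on ?S V" "continuous_on ?S x1" "continuous_on ?S x2"
    unfolding X_V_x1_v1_x2_v2_def by (auto intro!: continuous_intros)
  have bounds: "a \<le> X t \<and> X t \<le> 1 - a \<and> \<bar>V t / \<epsilon>\<bar> \<le> b \<and> m1 * (v1 t)\<^sup>2 \<le> 2 * E
      \<and> m2 * (v2 t)\<^sup>2 \<le> 2 * E \<and> 0 \<le> x1 t \<and> x1 t \<le> X t \<and> X t \<le> x2 t \<and> x2 t \<le> 1" if "t \<in> ?S" for t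
    using conf[OF that] by (simp add: z confined_def)
  have "0 \<le> x1 t \<and> x1 t \<le> X t \<and> a \<le> X t \<and> X t \<le> 1 \<and> m1 * (v1 t)\<^sup>2 \<le> 2 * E" if "t \<in> ?S" for t
    using bounds[OF that] assms(2,3) by auto
  from piston_force_integral_bound[OF assms(1-4) derivs(1,2) cont(1) this]
  have I1: "integral ?S (\<lambda>t. - kd' kp \<delta> (X t - x1 t)) \<le> 4 / a * (E * (TT - T') + m1 + 2 * E)" .
  have "continuous_on ?S (\<lambda>t. 1 - X t)" using cont(1) by (intro continuous_intros)
  moreover have "0 \<le> 1 - x2 t \<and> 1 - x2 t \<le> 1 - X t \<and> a \<le> 1 - X t \<and> 1 - X t \<le> 1
      \<and> m2 * (- v2 t)\<^sup>2 \<le> 2 * E" if "t \<in> ?S" for t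
    using bounds[OF that] assms(2,3) by auto
  ultimately have I2: "integral ?S (\<lambda>t. - kd' kp \<delta> (x2 t - X t)) \<le> 4 / a * (E * (TT - T') + m2 + 2 * E)"
    using piston_force_integral_bound[OF assms(1-3,5) derivs(3,4)] by simp
  have "\<bar>V T' / \<epsilon>\<bar> \<le> b" using bounds[of T'] \<open>T' \<le> TT\<close> by simp
  then have "0 \<le> b" by (rule order_trans[OF abs_ge_zero])
  have "norm (integral ?S (\<lambda>t. Hfield kp \<epsilon> \<delta> (z t)))
      \<le> b * (TT - T') + (1 + b) * (integral ?S (\<lambda>t. - kd' kp \<delta> (X t - x1 t))
                                    + integral ?S (\<lambda>t. - kd' kp \<delta> (x2 t - X t)))"
    unfolding z using bounds by (intro norm_integral_Hfield_le assms(1,2) cont) auto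
  also have "\<dots> \<le> b * (TT - T') + (1 + b) * (4 / a * (2 * E * (TT - T') + m1 + m2 + 4 * E))"
  proof -
    have "4 / a * (E * (TT - T') + m1 + 2 * E) + 4 / a * (E * (TT - T') + m2 + 2 * E)
        = 4 / a * (2 * E * (TT - T') + m1 + m2 + 4 * E)"
      by (simp add: algebra_simps)
    then show ?thesis
      using I1 I2 \<open>0 \<le> b\<close> by (intro add_left_mono mult_left_mono) auto
  qed
  finally show ?thesis .
qed

lemma Hfield_integral_bound_before_cutoff:
  assumes "0 < m1" "0 < m2" "0 \<le> T" "0 \<le> b" "0 < \<delta>" "4 * \<delta> \<le> a" "0 < \<epsilon>"
    and Vs_bounds: "\<And>X W E1 E2. (X, W, E1, E2) \<in> Vs \<Longrightarrow>
      a \<le> X \<and> X \<le> 1 - a \<and> \<bar>W\<bar> \<le> b \<and> E1 < k 0 \<and> E2 < k 0"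
    and z': "\<forall>t\<ge>0. (z has_vector_derivative field kp m1 m2 \<epsilon> \<delta> (z t)) (at t within {0..})"
    and "0 \<le> T'" "T' \<le> TT" "TT \<le> cutoff Vs T hb (\<lambda>t. slowvars k m1 m2 \<epsilon> \<delta> (z t)) \<epsilon> / \<epsilon>"
  shows "norm (integral {T'..TT} (\<lambda>t. Hfield kp \<epsilon> \<delta> (z t)))
    \<le> (b + (1 + b) * (4 / a) * (m1 + m2 + 6 * k 0)) * max 1 (TT - T')"
proof (cases "T' = TT")
  case True
  have "0 \<le> (b + (1 + b) * (4 / a) * (m1 + m2 + 6 * k 0)) * max 1 (TT - T')"
    using assms(1,2,4-6) k_nonneg[of 0] by (auto intro!: mult_nonneg_nonneg add_nonneg_nonneg)
  with True show ?thesis by simp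
next
  case False
  let ?S = "{T'..TT}"
  have z'_S: "(z has_vector_derivative field kp m1 m2 \<epsilon> \<delta> (z t)) (at t within ?S)" if "t \<in> ?S" for t
  proof (rule has_vector_derivative_within_subset)
    show "(z has_vector_derivative field kp m1 m2 \<epsilon> \<delta> (z t)) (at t within {0..})"
      using z' that \<open>0 \<le> T'\<close> by auto
  qed (use \<open>0 \<le> T'\<close> in auto)
  have "z t \<in> confined a b (k 0) m1 m2 \<epsilon>" if "t \<in> {T'..<TT}" for t
  proof (rule slowvars_in_Vs_imp_confined[OF assms(5,1,2) Vs_bounds])
    show "slowvars k m1 m2 \<epsilon> \<delta> (z t) \<in> Vs"
      using in_Vs_before_cutoff[of T \<epsilon> t Vs hb "\<lambda>t. slowvars k m1 m2 \<epsilon> \<delta> (z t)"] that assms(3,7,10,12)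
      by auto
  qed
  moreover have "continuous_on ?S z"
    using z'_S by (auto simp: continuous_on_eq_continuous_within intro: has_vector_derivative_continuous z'_S)
  ultimately have "z ` ?S \<subseteq> confined a b (k 0) m1 m2 \<epsilon>"
    using False \<open>T' \<le> TT\<close> closed_confined by (intro image_atLeastAtMost_subset_closed) auto
  then have "norm (integral ?S (\<lambda>t. Hfield kp \<epsilon> \<delta> (z t)))
      \<le> b * (TT - T') + (1 + b) * (4 / a * (2 * k 0 * (TT - T') + m1 + m2 + 4 * k 0))"
    using z'_S assms(1,2,5,6,11) by (intro Hfield_integral_bound) auto
  also have "\<dots> = (b + (1 + b) * (4 / a) * (2 * k 0)) * (TT - T') + (1 + b) * (4 / a) * (m1 + m2 + 4 * k 0)"
    using assms(5,6) by (simp add: field_simps)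
  also have "\<dots> \<le> (b + (1 + b) * (4 / a) * (2 * k 0) + (1 + b) * (4 / a) * (m1 + m2 + 4 * k 0))
      * max 1 (TT - T')"
    using assms(1,2,4-6) k_nonneg[of 0]
    by (intro mult_add_le_max_one add_nonneg_nonneg mult_nonneg_nonneg) auto
  also have "\<dots> = (b + (1 + b) * (4 / a) * (m1 + m2 + 6 * k 0)) * max 1 (TT - T')"
    using assms(5,6) by (simp add: field_simps)
  finally show ?thesis .
qed

end

theorem mainTheorem7:
  fixes k kp kpp :: "real \<Rightarrow> real" and m1 m2 T :: real
    and Vs :: "slow set" and A B C :: "real set"
  assumes k_deriv: "\<And>x. (k has_real_derivative kp x) (at x)"
    and kp_deriv: "\<And>x. (kp has_real_derivative kpp x) (at x)"
    and kpp_cont: "continuous_on UNIV kpp"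
    and k_zero: "\<And>x. x \<ge> 1 \<Longrightarrow> k x = 0"
    and kp_neg: "\<And>x. x < 1 \<Longrightarrow> kp x < 0"
    and masses: "m1 > 0" "m2 > 0"
    and T_pos: "T > 0"
    and V_compact: "compact Vs"
    and ABC: "compact A" "A \<subseteq> {0<..<1}" "compact B" "compact C" "C \<subseteq> {0<..<k 0}"
    and V_sub: "\<And>X W E1 E2. (X, W, E1, E2) \<in> Vs \<Longrightarrow> X \<in> A \<and> W \<in> B \<and> E1 \<in> C \<and> E2 \<in> C"
  shows "\<exists>\<delta>0 > 0. \<exists>\<epsilon>1 > 0. \<exists>Cst > 0.
    \<forall>\<delta> \<in> {0<..\<delta>0}. \<forall>\<epsilon> \<in> {0<..\<epsilon>1}. \<forall>(z :: real \<Rightarrow> phase) (hb :: real \<Rightarrow> slow).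
      (\<forall>t \<ge> 0. (z has_vector_derivative field kp m1 m2 \<epsilon> \<delta> (z t)) (at t within {0..}))
      \<and> fst (snd (snd (z 0))) < fst (z 0)
      \<and> fst (z 0) < fst (snd (snd (snd (snd (z 0)))))
      \<and> slowvars k m1 m2 \<epsilon> \<delta> (z 0) \<in> Vs
      \<and> hb 0 = slowvars k m1 m2 \<epsilon> \<delta> (z 0)
      \<and> (\<forall>\<tau> \<in> {0..T}. (\<forall>s \<in> {0..\<tau>}. hb s \<in> Vs) \<longrightarrow>
           (\<forall>s \<in> {0..\<tau>}. (hb has_vector_derivative Hbar k m1 m2 \<delta> (hb s)) (at s within {0..\<tau>})))
      \<longrightarrow> (\<forall>T' TT. 0 \<le> T' \<and> T' \<le> TT
              \<and> TT \<le> cutoff Vs T hb (\<lambda>t. slowvars k m1 m2 \<epsilon> \<delta> (z t)) \<epsilon> / \<epsilon>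
            \<longrightarrow> norm (integral {T'..TT} (\<lambda>s. Hfield kp \<epsilon> \<delta> (z s))) \<le> Cst * max 1 (TT - T'))"
proof -
  interpret soft_core_potential k kp
    using k_deriv k_zero kp_neg kp_deriv
    by unfold_locales (auto intro!: continuous_at_imp_continuous_on DERIV_isCont)
  obtain a where "0 < a" and a: "\<And>X. X \<in> A \<Longrightarrow> a \<le> X \<and> X \<le> 1 - a"
    using compact_subset_unit_interval_margin[OF ABC(1,2)] by blast
  obtain b where "0 < b" and b: "\<And>W. W \<in> B \<Longrightarrow> \<bar>W\<bar> \<le> b"
    using compact_imp_bounded[OF ABC(3)] by (auto simp: bounded_pos)
  have Vs_bounds: "a \<le> X \<and> X \<le> 1 - a \<and> \<bar>W\<bar> \<le> b \<and> E1 < k 0 \<and> E2 < k 0" if "(X, W, E1, E2) \<in> Vs" for X W E1 E2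
    using V_sub[OF that] a b ABC(5) by auto
  define Cst where "Cst = b + (1 + b) * (4 / a) * (m1 + m2 + 6 * k 0)"
  have "0 < Cst"
    unfolding Cst_def using \<open>0 < a\<close> \<open>0 < b\<close> masses k_nonneg[of 0] by (auto intro!: add_pos_nonneg)
  have bound: "norm (integral {T'..TT} (\<lambda>s. Hfield kp \<epsilon> \<delta> (z s))) \<le> Cst * max 1 (TT - T')"
    if "\<delta> \<in> {0<..a / 4}" "\<epsilon> \<in> {0<..1}"
      and "\<forall>t \<ge> 0. (z has_vector_derivative field kp m1 m2 \<epsilon> \<delta> (z t)) (at t within {0..})"
      and "0 \<le> T'" "T' \<le> TT" "TT \<le> cutoff Vs T hb (\<lambda>t. slowvars k m1 m2 \<epsilon> \<delta> (z t)) \<epsilon> / \<epsilon>"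
    for \<delta> \<epsilon> z hb T' TT
    unfolding Cst_def using that masses T_pos \<open>0 < b\<close>
    by (intro Hfield_integral_bound_before_cutoff[OF _ _ _ _ _ _ _ Vs_bounds]) auto
  show ?thesis
    by (rule exI[of _ "a / 4"], rule conjI, simp add: \<open>0 < a\<close>, rule exI[of _ "1::real"], rule conjI, simp,
        rule exI[of _ Cst], rule conjI, fact)
      (use bound in blast)
qed

end
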